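(* Let $\mathcal{C}$ be a category, $\rho$ a canonical PBPO rule with components $l : K \to L$, $r : K \to R$, $t_L : L \to L'$, $t_K : K \to K'$, $t_R : R \to R'$, $l' : K' \to L'$, $r' : K' \to R'$. Let $G_L$ be an object and let $m' \circ e : L \to G_L$ be a morphism with $m' : L_c \rightarrowtail G_L$ a monomorphism and $e : L \twoheadrightarrow L_c$ an epimorphism, and assume $t_L = t_{L_c} \circ e$ for some (necessarily unique) $t_{L_c} : L_c \to L'$ and that the compacted rule $\rho_e$ exists. Then for all $\alpha : G_L \to L'$ and all objects $G_R$: $G_L \Rightarrow_\rho^{(m' \circ e),\alpha} G_R$ if and only if $G_L \Rightarrow_{\rho_e}^{m',\alpha} G_R$.
   Context: A PBPO rule consists of objects $L,K,R,L',K',R'$ and morphisms $l : K \to L$, $r : K \to R$, $t_L : L \to L'$, $t_K : K \to K'$, $t_R : R \to R'$, $l' : K' \to L'$, $r' : K' \to R'$ with $t_L \circ l = l' \circ t_K$ and $t_R \circ r = r' \circ t_K$. It is canonical if $L \xleftarrow{l} K \xrightarrow{t_K} K'$ is a pullback of $t_L, l'$ and $K' \xrightarrow{r'} R' \xleftarrow{t_R} R$ is a pushout of $t_K, r$. A PBPO rewrite step $G_L \Rightarrow_\rho^{m,\alpha} G_R$ is given by morphisms $m : L \to G_L$, $\alpha : G_L \to L'$ with $t_L = \alpha \circ m$; a pullback $G_L \xleftarrow{g_L} G_K \xrightarrow{u'} K'$ of $\alpha$ and $l'$; the unique $u : K \to G_K$ with $g_L \circ u = m \circ l$ and $u' \circ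 u = t_K$; a pushout $G_K \xrightarrow{g_R} G_R \xleftarrow{w} R$ of $u$ and $r$; and the unique $w' : G_R \to R'$ with $w' \circ g_R = r' \circ u'$ and $w' \circ w = t_R$. Compacted rule: for a canonical PBPO rule $\rho$ and a factorization $t_L = t_{L_c} \circ e$ with $e : L \to L_c$ epi, let $L_c \xleftarrow{k} K_c \xrightarrow{t_{K_c}} K'$ be a pullback of $t_{L_c}$ and $l'$; let $e_K : K \to K_c$ be the unique morphism with $k \circ e_K = e \circ l$ and $t_{K_c} \circ e_K = t_K$; let $K_c \xrightarrow{r_c} R_c \xleftarrow{e_R} R$ be a pushout of $e_K$ and $r$; and let $t_{R_c} : R_c \to R'$ be the unique morphism with $t_{R_c} \circ r_c = r' \circ t_{K_c}$ and $t_{R_c} \circ e_R = t_R$. The compacted rule $\rho_e$ is the (canonical) PBPO rule with $L_c \xleftarrow{k} K_c \xrightarrow{r_c} R_c$, $L' \xleftarrow{l'} K' \xrightarrow{r'} R'$ and typings $t_{L_c}, t_{K_c}, t_{R_c}$. *)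

theory Defs
  imports Main
begin

record ('o, 'a) cat =
  Obj  :: "'o set"
  Arr  :: "'a set"
  Dom  :: "'a \<Rightarrow> 'o"
  Cod  :: "'a \<Rightarrow> 'o"
  Comp :: "'a \<Rightarrow> 'a \<Rightarrow> 'a"   (* Comp C g f  =  g \<circ> f, defined when Cod f = Dom g *)
  Ide  :: "'o \<Rightarrow> 'a"

definition category :: "('o, 'a) cat \<Rightarrow> bool" where
  "category C \<longleftrightarrow>
     (\<forall>f\<in>Arr C. Dom C f \<in> Obj C \<and> Cod C f \<in> Obj C) \<and>
     (\<forall>A\<in>Obj C. Ide C A \<in> Arr C \<and> Dom C (Ide C A) = A \<and> Cod C (Ide C A) = A) \<and>
     (\<forall>f\<in>Arr C. \<forall>g\<in>Arr C. Cod C f = Dom C g \<longrightarrow>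
        Comp C g f \<in> Arr C \<and> Dom C (Comp C g f) = Dom C f \<and> Cod C (Comp C g f) = Cod C g) \<and>
     (\<forall>f\<in>Arr C. \<forall>g\<in>Arr C. \<forall>h\<in>Arr C. Cod C f = Dom C g \<longrightarrow> Cod C g = Dom C h \<longrightarrow>
        Comp C h (Comp C g f) = Comp C (Comp C h g) f) \<and>
     (\<forall>f\<in>Arr C. Comp C (Ide C (Cod C f)) f = f \<and> Comp C f (Ide C (Dom C f)) = f)"

definition hom :: "('o, 'a) cat \<Rightarrow> 'a \<Rightarrow> 'o \<Rightarrow> 'o \<Rightarrow> bool" where
  "hom C f A B \<longleftrightarrow> f \<in> Arr C \<and> Dom C f = A \<and> Cod C f = B"

definition is_mono :: "('o, 'a) cat \<Rightarrow> 'a \<Rightarrow> bool" where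
  "is_mono C m \<longleftrightarrow> m \<in> Arr C \<and>
     (\<forall>g\<in>Arr C. \<forall>h\<in>Arr C. Cod C g = Dom C m \<longrightarrow> Cod C h = Dom C m \<longrightarrow> Dom C g = Dom C h \<longrightarrow>
        Comp C m g = Comp C m h \<longrightarrow> g = h)"

definition is_epi :: "('o, 'a) cat \<Rightarrow> 'a \<Rightarrow> bool" where
  "is_epi C e \<longleftrightarrow> e \<in> Arr C \<and>
     (\<forall>g\<in>Arr C. \<forall>h\<in>Arr C. Dom C g = Cod C e \<longrightarrow> Dom C h = Cod C e \<longrightarrow> Cod C g = Cod C h \<longrightarrow>
        Comp C g e = Comp C h e \<longrightarrow> g = h)"

definition is_pullback :: "('o, 'a) cat \<Rightarrow> 'a \<Rightarrow> 'a \<Rightarrow> 'a \<Rightarrow> 'a \<Rightarrow> bool" where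
  "is_pullback C f g p q \<longleftrightarrow>
     f \<in> Arr C \<and> g \<in> Arr C \<and> p \<in> Arr C \<and> q \<in> Arr C \<and>
     Cod C f = Cod C g \<and> Dom C p = Dom C q \<and> Cod C p = Dom C f \<and> Cod C q = Dom C g \<and>
     Comp C f p = Comp C g q \<and>
     (\<forall>x\<in>Arr C. \<forall>y\<in>Arr C. Cod C x = Dom C f \<longrightarrow> Cod C y = Dom C g \<longrightarrow> Dom C x = Dom C y \<longrightarrow>
        Comp C f x = Comp C g y \<longrightarrow>
        (\<exists>!u. hom C u (Dom C x) (Dom C p) \<and> Comp C p u = x \<and> Comp C q u = y))"

definition is_pushout :: "('o, 'a) cat \<Rightarrow> 'a \<Rightarrow> 'a \<Rightarrow> 'a \<Rightarrow> 'a \<Rightarrow> bool" where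
  "is_pushout C f g p q \<longleftrightarrow>
     f \<in> Arr C \<and> g \<in> Arr C \<and> p \<in> Arr C \<and> q \<in> Arr C \<and>
     Dom C f = Dom C g \<and> Cod C p = Cod C q \<and> Dom C p = Cod C f \<and> Dom C q = Cod C g \<and>
     Comp C p f = Comp C q g \<and>
     (\<forall>x\<in>Arr C. \<forall>y\<in>Arr C. Dom C x = Cod C f \<longrightarrow> Dom C y = Cod C g \<longrightarrow> Cod C x = Cod C y \<longrightarrow>
        Comp C x f = Comp C y g \<longrightarrow>
        (\<exists>!u. hom C u (Cod C p) (Cod C x) \<and> Comp C u p = x \<and> Comp C u q = y))"

definition pbpo_rule :: "('o, 'a) cat \<Rightarrow> 'a \<Rightarrow> 'a \<Rightarrow> 'a \<Rightarrow> 'a \<Rightarrow> 'a \<Rightarrow> 'a \<Rightarrow> 'a \<Rightarrow> bool" where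
  "pbpo_rule C l r tL tK tR l' r' \<longleftrightarrow>
     l \<in> Arr C \<and> r \<in> Arr C \<and> tL \<in> Arr C \<and> tK \<in> Arr C \<and> tR \<in> Arr C \<and> l' \<in> Arr C \<and> r' \<in> Arr C \<and>
     Dom C r = Dom C l \<and> Dom C tK = Dom C l \<and>
     Dom C tL = Cod C l \<and> Dom C tR = Cod C r \<and>
     Dom C l' = Cod C tK \<and> Dom C r' = Cod C tK \<and>
     Cod C l' = Cod C tL \<and> Cod C r' = Cod C tR \<and>
     Comp C tL l = Comp C l' tK \<and> Comp C tR r = Comp C r' tK"

definition canonical_pbpo_rule :: "('o, 'a) cat \<Rightarrow> 'a \<Rightarrow> 'a \<Rightarrow> 'a \<Rightarrow> 'a \<Rightarrow> 'a \<Rightarrow> 'a \<Rightarrow> 'a \<Rightarrow> bool" where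
  "canonical_pbpo_rule C l r tL tK tR l' r' \<longleftrightarrow>
     pbpo_rule C l r tL tK tR l' r' \<and>
     is_pullback C tL l' l tK \<and>
     is_pushout C tK r r' tR"

definition pbpo_step ::
  "('o, 'a) cat \<Rightarrow> 'a \<Rightarrow> 'a \<Rightarrow> 'a \<Rightarrow> 'a \<Rightarrow> 'a \<Rightarrow> 'a \<Rightarrow> 'a \<Rightarrow> 'a \<Rightarrow> 'a \<Rightarrow> 'o \<Rightarrow> 'o \<Rightarrow> bool" where
  "pbpo_step C l r tL tK tR l' r' m \<alpha> GL GR \<longleftrightarrow>
     hom C m (Cod C l) GL \<and> hom C \<alpha> GL (Cod C tL) \<and> tL = Comp C \<alpha> m \<and>
     (\<exists>gL u' u gR w w'.
        is_pullback C \<alpha> l' gL u' \<and>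
        hom C u (Dom C l) (Dom C gL) \<and> Comp C gL u = Comp C m l \<and> Comp C u' u = tK \<and>
        is_pushout C u r gR w \<and> Cod C gR = GR \<and>
        hom C w' GR (Cod C tR) \<and> Comp C w' gR = Comp C r' u' \<and> Comp C w' w = tR)"

definition compacted_rule ::
  "('o, 'a) cat \<Rightarrow> 'a \<Rightarrow> 'a \<Rightarrow> 'a \<Rightarrow> 'a \<Rightarrow> 'a \<Rightarrow> 'a \<Rightarrow> 'a \<Rightarrow> 'a \<Rightarrow> 'a \<Rightarrow>
    'a \<Rightarrow> 'a \<Rightarrow> 'a \<Rightarrow> 'a \<Rightarrow> 'a \<Rightarrow> 'a \<Rightarrow> bool" where
  "compacted_rule C l r tL tK tR l' r' e tLc k tKc eK rc eR tRc \<longleftrightarrow>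
     canonical_pbpo_rule C l r tL tK tR l' r' \<and>
     is_epi C e \<and> Dom C e = Cod C l \<and> hom C tLc (Cod C e) (Cod C tL) \<and> tL = Comp C tLc e \<and>
     is_pullback C tLc l' k tKc \<and>
     hom C eK (Dom C l) (Dom C k) \<and> Comp C k eK = Comp C e l \<and> Comp C tKc eK = tK \<and>
     is_pushout C eK r rc eR \<and>
     hom C tRc (Cod C rc) (Cod C tR) \<and> Comp C tRc rc = Comp C r' tKc \<and> Comp C tRc eR = tR"

end

theory Submission
  imports Defs
begin

text \<open>Since \<open>e\<close> is epi, \<open>t\<^sub>L = \<alpha> \<circ> m' \<circ> e\<close> forces \<open>t\<^sub>L\<^sub>c = \<alpha> \<circ> m'\<close>, so both steps
  use the same pullback \<open>G\<^sub>K\<close> of \<open>\<alpha>\<close> and \<open>l'\<close>. By the universal property of \<open>G\<^sub>K\<close>, the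
  arrow \<open>u : K \<rightarrow> G\<^sub>K\<close> of the \<open>\<rho>\<close>-step factors as \<open>u = u\<^sub>c \<circ> e\<^sub>K\<close> through the arrow
  \<open>u\<^sub>c : K\<^sub>c \<rightarrow> G\<^sub>K\<close> of the \<open>\<rho>\<^sub>e\<close>-step. The pushout square of \<open>e\<^sub>K\<close> and \<open>r\<close> defining
  \<open>R\<^sub>c\<close> sits next to the square of \<open>u\<^sub>c\<close> and \<open>r\<^sub>c\<close>, so by the pasting lemma for pushouts
  the latter is a pushout exactly when the composite square of \<open>u\<close> and \<open>r\<close> is one; the
  arrows into \<open>R'\<close> agree by uniqueness of mediating arrows out of \<open>R\<^sub>c\<close>.\<close>

locale category_ctx =
  fixes C :: "('o, 'a) cat"
  assumes category: "category C"
begin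

abbreviation arr_comp (infixr "\<cdot>" 55) where "g \<cdot> f \<equiv> Comp C g f"

lemma hom_comp [intro]: "hom C f A B \<Longrightarrow> hom C g B D \<Longrightarrow> hom C (g \<cdot> f) A D"
  using category unfolding category_def hom_def by auto

lemma comp_assoc:
  "hom C f A B \<Longrightarrow> hom C g B D \<Longrightarrow> hom C h D E \<Longrightarrow> h \<cdot> (g \<cdot> f) = (h \<cdot> g) \<cdot> f"
  unfolding hom_def using category[unfolded category_def] by (elim conjE) simp

lemma epi_cancel:
  "is_epi C e \<Longrightarrow> hom C e A B \<Longrightarrow> hom C g B D \<Longrightarrow> hom C h B D \<Longrightarrow> g \<cdot> e = h \<cdot> e \<Longrightarrow> g = h"
  unfolding is_epi_def hom_def by (elim conjE) simp

lemma pullback_homs: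
  assumes "is_pullback C f g p q"
  shows "hom C f (Dom C f) (Cod C f)" "hom C g (Dom C g) (Cod C f)"
    "hom C p (Dom C p) (Dom C f)" "hom C q (Dom C p) (Dom C g)"
  using assms unfolding is_pullback_def hom_def by auto

lemma pullback_commutes: "is_pullback C f g p q \<Longrightarrow> f \<cdot> p = g \<cdot> q"
  unfolding is_pullback_def by blast

lemma pullback_universal:
  assumes "is_pullback C f g p q" "hom C x X (Dom C f)" "hom C y X (Dom C g)" "f \<cdot> x = g \<cdot> y"
  shows "\<exists>!u. hom C u X (Dom C p) \<and> p \<cdot> u = x \<and> q \<cdot> u = y"
proof -
  have "x \<in> Arr C" "y \<in> Arr C" "Cod C x = Dom C f" "Cod C y = Dom C g" "Dom C x = Dom C y"
    and X: "Dom C x = X"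
    using assms(2,3) unfolding hom_def by auto
  then have "\<exists>!u. hom C u (Dom C x) (Dom C p) \<and> p \<cdot> u = x \<and> q \<cdot> u = y"
    using assms(1,4) unfolding is_pullback_def by (elim conjE) simp
  then show ?thesis unfolding X .
qed

lemma pullback_lift:
  assumes "is_pullback C f g p q" "hom C x X (Dom C f)" "hom C y X (Dom C g)" "f \<cdot> x = g \<cdot> y"
  obtains u where "hom C u X (Dom C p)" "p \<cdot> u = x" "q \<cdot> u = y"
  using pullback_universal[OF assms] by (elim ex1E conjE) (rule that)

lemma pullback_lift_unique:
  assumes pb: "is_pullback C f g p q" and u: "hom C u X (Dom C p)" and v: "hom C v X (Dom C p)"
    and "p \<cdot> u = p \<cdot> v" "q \<cdot> u = q \<cdot> v"
  shows "u = v"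
proof -
  note homs = pullback_homs[OF pb]
  have "f \<cdot> (p \<cdot> u) = g \<cdot> (q \<cdot> u)"
    using comp_assoc[OF u homs(3,1)] comp_assoc[OF u homs(4,2)] pullback_commutes[OF pb] by simp
  then have "\<exists>!z. hom C z X (Dom C p) \<and> p \<cdot> z = p \<cdot> u \<and> q \<cdot> z = q \<cdot> u"
    using pullback_universal[OF pb] u homs by blast
  then show ?thesis
    unfolding ex1_iff_ex_Uniq by (elim conjE Uniq_D) (use assms in auto)
qed

lemma pushout_homs:
  assumes "is_pushout C f g p q"
  shows "hom C f (Dom C f) (Cod C f)" "hom C g (Dom C f) (Cod C g)"
    "hom C p (Cod C f) (Cod C p)" "hom C q (Cod C g) (Cod C p)"
  using assms unfolding is_pushout_def hom_def by auto

lemma pushout_commutes: "is_pushout C f g p q \<Longrightarrow> p \<cdot> f = q \<cdot> g"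
  unfolding is_pushout_def by blast

lemma pushout_universal:
  assumes "is_pushout C f g p q" "hom C x (Cod C f) X" "hom C y (Cod C g) X" "x \<cdot> f = y \<cdot> g"
  shows "\<exists>!u. hom C u (Cod C p) X \<and> u \<cdot> p = x \<and> u \<cdot> q = y"
proof -
  have "x \<in> Arr C" "y \<in> Arr C" "Dom C x = Cod C f" "Dom C y = Cod C g" "Cod C x = Cod C y"
    and X: "Cod C x = X"
    using assms(2,3) unfolding hom_def by auto
  then have "\<exists>!u. hom C u (Cod C p) (Cod C x) \<and> u \<cdot> p = x \<and> u \<cdot> q = y"
    using assms(1,4) unfolding is_pushout_def by (elim conjE) simp
  then show ?thesis unfolding X .
qed

lemma pushout_desc:
  assumes "is_pushout C f g p q" "hom C x (Cod C f) X" "hom C y (Cod C g) X" "x \<cdot> f = y \<cdot> g"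
  obtains u where "hom C u (Cod C p) X" "u \<cdot> p = x" "u \<cdot> q = y"
  using pushout_universal[OF assms] by (elim ex1E conjE) (rule that)

lemma pushout_desc_unique:
  assumes po: "is_pushout C f g p q" and u: "hom C u (Cod C p) X" and v: "hom C v (Cod C p) X"
    and "u \<cdot> p = v \<cdot> p" "u \<cdot> q = v \<cdot> q"
  shows "u = v"
proof -
  note homs = pushout_homs[OF po]
  have "(u \<cdot> p) \<cdot> f = (u \<cdot> q) \<cdot> g"
    using comp_assoc[OF homs(1,3) u] comp_assoc[OF homs(2,4) u] pushout_commutes[OF po] by simp
  then have "\<exists>!z. hom C z (Cod C p) X \<and> z \<cdot> p = u \<cdot> p \<and> z \<cdot> q = u \<cdot> q"
    using pushout_universal[OF po] u homs by blast
  then show ?thesis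
    unfolding ex1_iff_ex_Uniq by (elim conjE Uniq_D) (use assms in auto)
qed

lemma is_pushoutI:
  assumes "hom C f Z A" "hom C g Z B" "hom C p A P" "hom C q B P" "p \<cdot> f = q \<cdot> g"
    and desc: "\<And>x y X. hom C x A X \<Longrightarrow> hom C y B X \<Longrightarrow> x \<cdot> f = y \<cdot> g \<Longrightarrow>
      \<exists>u. hom C u P X \<and> u \<cdot> p = x \<and> u \<cdot> q = y"
    and unique: "\<And>u v X. hom C u P X \<Longrightarrow> hom C v P X \<Longrightarrow> u \<cdot> p = v \<cdot> p \<Longrightarrow> u \<cdot> q = v \<cdot> q \<Longrightarrow>
      u = v"
  shows "is_pushout C f g p q"
proof -
  have "\<exists>!u. hom C u P (Cod C x) \<and> u \<cdot> p = x \<and> u \<cdot> q = y"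
    if "x \<in> Arr C" "y \<in> Arr C" "Dom C x = A" "Dom C y = B" "Cod C x = Cod C y" "x \<cdot> f = y \<cdot> g"
    for x y
    using desc[of x "Cod C x" y] unique[of _ "Cod C x"] that unfolding hom_def by metis
  with assms(1-5) show ?thesis
    unfolding is_pushout_def hom_def by auto
qed

lemma pushout_paste:
  assumes left: "is_pushout C f g p q" and right: "is_pushout C f' p p' q'"
  shows "is_pushout C (f' \<cdot> f) g p' (q' \<cdot> q)"
proof -
  note L = pushout_homs[OF left] and R = pushout_homs[OF right]
  have f': "hom C f' (Cod C f) (Cod C f')"
    using L(3) R(1,2) by (auto simp: hom_def)
  show ?thesis
  proof (rule is_pushoutI[OF _ L(2) R(3)])
    show "hom C (f' \<cdot> f) (Dom C f) (Cod C f')" "hom C (q' \<cdot> q) (Cod C g) (Cod C p')"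
      using L(1,4) R(4) f' by auto
    have "p' \<cdot> (f' \<cdot> f) = (q' \<cdot> p) \<cdot> f"
      using comp_assoc[OF L(1) f' R(3)] pushout_commutes[OF right] by simp
    also have "\<dots> = (q' \<cdot> q) \<cdot> g"
      using comp_assoc[OF L(1,3) R(4)] comp_assoc[OF L(2,4) R(4)] pushout_commutes[OF left] by simp
    finally show "p' \<cdot> (f' \<cdot> f) = (q' \<cdot> q) \<cdot> g" .
  next
    fix x y X
    assume x: "hom C x (Cod C f') X" and y: "hom C y (Cod C g) X" and eq: "x \<cdot> (f' \<cdot> f) = y \<cdot> g"
    have "(x \<cdot> f') \<cdot> f = y \<cdot> g"
      using comp_assoc[OF L(1) f' x] eq by simp
    with x f' y obtain z where z: "hom C z (Cod C p) X" "z \<cdot> p = x \<cdot> f'" "z \<cdot> q = y"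
      using pushout_desc[OF left] by blast
    then obtain v where v: "hom C v (Cod C p') X" "v \<cdot> p' = x" "v \<cdot> q' = z"
      using pushout_desc[OF right x] by metis
    have "v \<cdot> (q' \<cdot> q) = y"
      using comp_assoc[OF L(4) R(4) v(1)] v z by simp
    with v show "\<exists>u. hom C u (Cod C p') X \<and> u \<cdot> p' = x \<and> u \<cdot> (q' \<cdot> q) = y"
      by blast
  next
    fix u v X
    assume u: "hom C u (Cod C p') X" and v: "hom C v (Cod C p') X"
      and eq_p': "u \<cdot> p' = v \<cdot> p'" and eq_q: "u \<cdot> (q' \<cdot> q) = v \<cdot> (q' \<cdot> q)"
    have "(u \<cdot> q') \<cdot> p = (v \<cdot> q') \<cdot> p"
      using comp_assoc[OF R(2,4) u] comp_assoc[OF R(2,4) v] comp_assoc[OF R(1,3) u]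
        comp_assoc[OF R(1,3) v] pushout_commutes[OF right] eq_p' by simp
    moreover have "(u \<cdot> q') \<cdot> q = (v \<cdot> q') \<cdot> q"
      using comp_assoc[OF L(4) R(4) u] comp_assoc[OF L(4) R(4) v] eq_q by simp
    ultimately have "u \<cdot> q' = v \<cdot> q'"
      using pushout_desc_unique[OF left] R(4) u v by blast
    then show "u = v"
      using pushout_desc_unique[OF right u v eq_p'] by blast
  qed
qed

lemma pushout_paste_cancel:
  assumes left: "is_pushout C f g p q" and outer: "is_pushout C (f' \<cdot> f) g p' q''"
    and f': "hom C f' (Cod C f) A'" and q': "hom C q' (Cod C p) (Cod C p')"
    and square: "p' \<cdot> f' = q' \<cdot> p" and triangle: "q' \<cdot> q = q''"
  shows "is_pushout C f' p p' q'"
proof -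
  note L = pushout_homs[OF left] and O = pushout_homs[OF outer]
  have f'f: "hom C (f' \<cdot> f) (Dom C f) A'"
    using L(1) f' by blast
  then have p': "hom C p' A' (Cod C p')"
    using O(3) by (simp add: hom_def)
  show ?thesis
  proof (rule is_pushoutI[OF f' L(3) p' q' square])
    fix x y X
    assume x: "hom C x A' X" and y: "hom C y (Cod C p) X" and eq: "x \<cdot> f' = y \<cdot> p"
    have "x \<cdot> (f' \<cdot> f) = (y \<cdot> p) \<cdot> f"
      using comp_assoc[OF L(1) f' x] eq by simp
    also have "\<dots> = (y \<cdot> q) \<cdot> g"
      using comp_assoc[OF L(1,3) y] comp_assoc[OF L(2,4) y] pushout_commutes[OF left] by simp
    finally have eq_outer: "x \<cdot> (f' \<cdot> f) = (y \<cdot> q) \<cdot> g" .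
    have "hom C x (Cod C (f' \<cdot> f)) X"
      using x f'f by (simp add: hom_def)
    moreover have "hom C (y \<cdot> q) (Cod C g) X"
      using L(4) y by blast
    ultimately obtain v where v: "hom C v (Cod C p') X" "v \<cdot> p' = x" "v \<cdot> q'' = y \<cdot> q"
      using pushout_desc[OF outer _ _ eq_outer] by blast
    have "(v \<cdot> q') \<cdot> p = y \<cdot> p"
      using comp_assoc[OF L(3) q' v(1)] comp_assoc[OF f' p' v(1)] square[symmetric] v(2) eq by simp
    moreover have "(v \<cdot> q') \<cdot> q = y \<cdot> q"
      using comp_assoc[OF L(4) q' v(1)] triangle v(3) by simp
    ultimately have "v \<cdot> q' = y"
      using pushout_desc_unique[OF left] q' v(1) y by blast
    with v show "\<exists>u. hom C u (Cod C p') X \<and> u \<cdot> p' = x \<and> u \<cdot> q' = y"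
      by blast
  next
    fix u v X
    assume u: "hom C u (Cod C p') X" and v: "hom C v (Cod C p') X"
      and eq_p': "u \<cdot> p' = v \<cdot> p'" and eq_q': "u \<cdot> q' = v \<cdot> q'"
    have "u \<cdot> q'' = v \<cdot> q''"
      using comp_assoc[OF L(4) q' u] comp_assoc[OF L(4) q' v] triangle eq_q' by simp
    then show "u = v"
      using pushout_desc_unique[OF outer u v eq_p'] by blast
  qed
qed

end

locale compaction = category_ctx C for C :: "('o, 'a) cat" +
  fixes l r tL tK tR l' r' e tLc k tKc eK rc eR tRc :: 'a
  assumes compacted: "compacted_rule C l r tL tK tR l' r' e tLc k tKc eK rc eR tRc"
begin

abbreviation "K \<equiv> Dom C l"
abbreviation "L \<equiv> Cod C l"
abbreviation "R \<equiv> Cod C r"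
abbreviation "K' \<equiv> Cod C tK"
abbreviation "L' \<equiv> Cod C tL"
abbreviation "R' \<equiv> Cod C tR"
abbreviation "Kc \<equiv> Dom C k"
abbreviation "Lc \<equiv> Cod C e"
abbreviation "Rc \<equiv> Cod C rc"

lemma epi_e: "is_epi C e"
  and pullback_compacted: "is_pullback C tLc l' k tKc"
  and pushout_compacted: "is_pushout C eK r rc eR"
  and tL_factors: "tL = tLc \<cdot> e"
  and compacted_match: "k \<cdot> eK = e \<cdot> l"
  and compacted_typing_K: "tKc \<cdot> eK = tK"
  and compacted_typing_R: "tRc \<cdot> rc = r' \<cdot> tKc" "tRc \<cdot> eR = tR"
  using compacted unfolding compacted_rule_def by auto

lemma hom_l: "hom C l K L" and hom_r: "hom C r K R" and hom_l': "hom C l' K' L'"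
  and hom_r': "hom C r' K' R'" and hom_e: "hom C e L Lc" and hom_tLc: "hom C tLc Lc L'"
  and hom_eK: "hom C eK K Kc" and hom_tRc: "hom C tRc Rc R'"
  using compacted unfolding compacted_rule_def canonical_pbpo_rule_def pbpo_rule_def is_epi_def
    hom_def by auto

lemma hom_k: "hom C k Kc Lc" and hom_tKc: "hom C tKc Kc K'"
  and hom_rc: "hom C rc Kc Rc" and hom_eR: "hom C eR R Rc"
  using pullback_homs[OF pullback_compacted] pushout_homs[OF pushout_compacted]
    hom_tLc hom_l' hom_eK hom_r by (auto simp: hom_def)

lemma tL_eq_iff_tLc_eq:
  assumes m': "hom C m' Lc GL" and \<alpha>: "hom C \<alpha> GL L'"
  shows "tL = \<alpha> \<cdot> (m' \<cdot> e) \<longleftrightarrow> tLc = \<alpha> \<cdot> m'"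
proof
  assume "tL = \<alpha> \<cdot> (m' \<cdot> e)"
  then have "tLc \<cdot> e = (\<alpha> \<cdot> m') \<cdot> e"
    using tL_factors comp_assoc[OF hom_e m' \<alpha>] by simp
  then show "tLc = \<alpha> \<cdot> m'"
    using epi_cancel[OF epi_e hom_e hom_tLc] m' \<alpha> by blast
next
  assume "tLc = \<alpha> \<cdot> m'"
  then show "tL = \<alpha> \<cdot> (m' \<cdot> e)"
    using tL_factors comp_assoc[OF hom_e m' \<alpha>] by simp
qed

lemma pullback_along_l'_homs:
  assumes "is_pullback C \<alpha> l' gL u'" and "hom C \<alpha> GL L'"
  shows "hom C gL (Dom C gL) GL" "hom C u' (Dom C gL) K'"
  using pullback_homs[OF assms(1)] assms(2) hom_l' unfolding hom_def by auto

lemma match_through_compaction: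
  assumes gL: "hom C gL GK GL" and uc: "hom C uc Kc GK" and m': "hom C m' Lc GL"
    and "gL \<cdot> uc = m' \<cdot> k"
  shows "gL \<cdot> (uc \<cdot> eK) = (m' \<cdot> e) \<cdot> l"
proof -
  have "gL \<cdot> (uc \<cdot> eK) = (m' \<cdot> k) \<cdot> eK"
    using comp_assoc[OF hom_eK uc gL] assms(4) by simp
  also have "\<dots> = m' \<cdot> (e \<cdot> l)"
    using comp_assoc[OF hom_eK hom_k m'] compacted_match by simp
  also have "\<dots> = (m' \<cdot> e) \<cdot> l"
    using comp_assoc[OF hom_l hom_e m'] .
  finally show ?thesis .
qed

lemma typing_through_compaction:
  assumes u': "hom C u' GK K'" and uc: "hom C uc Kc GK" and "u' \<cdot> uc = tKc"
  shows "u' \<cdot> (uc \<cdot> eK) = tK"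
  using comp_assoc[OF hom_eK uc u'] assms(3) compacted_typing_K by simp

lemma match_factors_through_compaction:
  assumes m': "hom C m' Lc GL" and \<alpha>: "hom C \<alpha> GL L'" "tLc = \<alpha> \<cdot> m'"
    and pb: "is_pullback C \<alpha> l' gL u'"
    and u: "hom C u K (Dom C gL)" "gL \<cdot> u = (m' \<cdot> e) \<cdot> l" "u' \<cdot> u = tK"
  obtains uc where "hom C uc Kc (Dom C gL)" "gL \<cdot> uc = m' \<cdot> k" "u' \<cdot> uc = tKc" "u = uc \<cdot> eK"
proof -
  note gL = pullback_along_l'_homs(1)[OF pb \<alpha>(1)] and u' = pullback_along_l'_homs(2)[OF pb \<alpha>(1)]
  have "\<alpha> \<cdot> (m' \<cdot> k) = l' \<cdot> tKc"
    using comp_assoc[OF hom_k m' \<alpha>(1)] \<alpha>(2) pullback_commutes[OF pullback_compacted] by simp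
  moreover have "hom C (m' \<cdot> k) Kc (Dom C \<alpha>)" "hom C tKc Kc (Dom C l')"
    using hom_comp[OF hom_k m'] \<alpha>(1) hom_tKc hom_l' by (simp_all add: hom_def)
  ultimately obtain uc where uc: "hom C uc Kc (Dom C gL)" "gL \<cdot> uc = m' \<cdot> k" "u' \<cdot> uc = tKc"
    using pullback_lift[OF pb] by blast
  have "hom C (uc \<cdot> eK) K (Dom C gL)"
    using hom_eK uc(1) by blast
  then have "u = uc \<cdot> eK"
    by (rule pullback_lift_unique[OF pb u(1)])
      (simp_all add: u match_through_compaction[OF gL uc(1) m' uc(2)]
        typing_through_compaction[OF u' uc(1,3)])
  with uc show thesis
    by (rule that)
qed

lemma pushout_factors_through_compaction:
  assumes uc: "hom C uc Kc GK" and po: "is_pushout C (uc \<cdot> eK) r gR w"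
  obtains wc where "is_pushout C uc rc gR wc" "wc \<cdot> eR = w"
proof -
  have gR: "hom C gR GK (Cod C gR)" and w: "hom C w R (Cod C gR)"
    using pushout_homs[OF po] hom_comp[OF hom_eK uc] by (auto simp: hom_def)
  have "(gR \<cdot> uc) \<cdot> eK = w \<cdot> r"
    using comp_assoc[OF hom_eK uc gR] pushout_commutes[OF po] by simp
  moreover have "hom C (gR \<cdot> uc) (Cod C eK) (Cod C gR)" "hom C w (Cod C r) (Cod C gR)"
    using hom_comp[OF uc gR] hom_eK w by (simp_all add: hom_def)
  ultimately obtain wc where wc: "hom C wc Rc (Cod C gR)" "wc \<cdot> rc = gR \<cdot> uc" "wc \<cdot> eR = w"
    using pushout_desc[OF pushout_compacted] by blast
  have "hom C uc (Cod C eK) GK"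
    using uc hom_eK by (simp add: hom_def)
  then have "is_pushout C uc rc gR wc"
    using pushout_paste_cancel[OF pushout_compacted po _ wc(1) wc(2)[symmetric] wc(3)] by blast
  then show thesis
    using wc(3) by (rule that)
qed

lemma pbpo_step_compacted_if_step:
  assumes m': "hom C m' Lc GL" and step: "pbpo_step C l r tL tK tR l' r' (m' \<cdot> e) \<alpha> GL GR"
  shows "pbpo_step C k rc tLc tKc tRc l' r' m' \<alpha> GL GR"
proof -
  from step obtain gL u' u gR w w' where
    \<alpha>: "hom C \<alpha> GL L'" "tL = \<alpha> \<cdot> (m' \<cdot> e)" and pb: "is_pullback C \<alpha> l' gL u'"
    and u: "hom C u K (Dom C gL)" "gL \<cdot> u = (m' \<cdot> e) \<cdot> l" "u' \<cdot> u = tK"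
    and po: "is_pushout C u r gR w" and GR: "Cod C gR = GR"
    and w': "hom C w' GR R'" "w' \<cdot> gR = r' \<cdot> u'" "w' \<cdot> w = tR"
    unfolding pbpo_step_def by blast
  have tLc: "tLc = \<alpha> \<cdot> m'"
    using tL_eq_iff_tLc_eq[OF m' \<alpha>(1)] \<alpha>(2) by simp
  obtain uc where uc: "hom C uc Kc (Dom C gL)" "gL \<cdot> uc = m' \<cdot> k" "u' \<cdot> uc = tKc"
    and u_eq: "u = uc \<cdot> eK"
    using match_factors_through_compaction[OF m' \<alpha>(1) tLc pb u] .
  obtain wc where po_c: "is_pushout C uc rc gR wc" and wc_eR: "wc \<cdot> eR = w"
    using pushout_factors_through_compaction[OF uc(1) po[unfolded u_eq]] .
  have gR: "hom C gR (Dom C gL) GR" and wc: "hom C wc Rc GR"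
    using pushout_homs[OF po_c] uc(1) GR by (auto simp: hom_def)
  have "(w' \<cdot> wc) \<cdot> rc = tRc \<cdot> rc"
    using comp_assoc[OF hom_rc wc w'(1)] comp_assoc[OF uc(1) gR w'(1)]
      comp_assoc[OF uc(1) pullback_along_l'_homs(2)[OF pb \<alpha>(1)] hom_r']
      pushout_commutes[OF po_c] w'(2) uc(3) compacted_typing_R(1) by simp
  moreover have "(w' \<cdot> wc) \<cdot> eR = tRc \<cdot> eR"
    using comp_assoc[OF hom_eR wc w'(1)] wc_eR w'(3) compacted_typing_R(2) by simp
  ultimately have w'_wc: "w' \<cdot> wc = tRc"
    using pushout_desc_unique[OF pushout_compacted] hom_comp[OF wc w'(1)] hom_tRc hom_rc
    by (simp add: hom_def)
  show ?thesis
    unfolding pbpo_step_def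
  proof (intro conjI exI)
    show "hom C m' (Cod C k) GL" "hom C \<alpha> GL (Cod C tLc)" "hom C uc (Dom C k) (Dom C gL)"
      "hom C w' GR (Cod C tRc)"
      using m' \<alpha>(1) uc(1) w'(1) hom_k hom_tLc hom_tRc by (simp_all add: hom_def)
    show "tLc = \<alpha> \<cdot> m'" "is_pullback C \<alpha> l' gL u'" "is_pushout C uc rc gR wc" "Cod C gR = GR"
      "gL \<cdot> uc = m' \<cdot> k" "u' \<cdot> uc = tKc" "w' \<cdot> gR = r' \<cdot> u'" "w' \<cdot> wc = tRc"
      by (fact tLc pb po_c GR uc(2,3) w'(2) w'_wc)+
  qed
qed

lemma pbpo_step_if_compacted_step:
  assumes m': "hom C m' Lc GL" and step: "pbpo_step C k rc tLc tKc tRc l' r' m' \<alpha> GL GR"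
  shows "pbpo_step C l r tL tK tR l' r' (m' \<cdot> e) \<alpha> GL GR"
proof -
  from step obtain gL u' uc gR wc w' where
    \<alpha>: "hom C \<alpha> GL L'" "tLc = \<alpha> \<cdot> m'" and pb: "is_pullback C \<alpha> l' gL u'"
    and uc: "hom C uc Kc (Dom C gL)" "gL \<cdot> uc = m' \<cdot> k" "u' \<cdot> uc = tKc"
    and po: "is_pushout C uc rc gR wc" and GR: "Cod C gR = GR"
    and w': "hom C w' GR R'" "w' \<cdot> gR = r' \<cdot> u'" "w' \<cdot> wc = tRc"
    using hom_tLc hom_tRc unfolding pbpo_step_def by (auto simp: hom_def)
  note gL = pullback_along_l'_homs(1)[OF pb \<alpha>(1)] and u' = pullback_along_l'_homs(2)[OF pb \<alpha>(1)]
  have wc: "hom C wc Rc GR"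
    using pushout_homs[OF po] GR by simp
  show ?thesis
    unfolding pbpo_step_def
  proof (intro conjI exI)
    show "hom C (m' \<cdot> e) (Cod C l) GL" "hom C \<alpha> GL (Cod C tL)" "hom C w' GR (Cod C tR)"
      "hom C (uc \<cdot> eK) (Dom C l) (Dom C gL)"
      using hom_e m' \<alpha>(1) w'(1) hom_eK uc(1) by auto
    show "tL = \<alpha> \<cdot> (m' \<cdot> e)"
      using tL_eq_iff_tLc_eq[OF m' \<alpha>(1)] \<alpha>(2) by simp
    show "gL \<cdot> (uc \<cdot> eK) = (m' \<cdot> e) \<cdot> l"
      using match_through_compaction[OF gL uc(1) m' uc(2)] .
    show "u' \<cdot> (uc \<cdot> eK) = tK"
      using typing_through_compaction[OF u' uc(1) uc(3)] .
    show "is_pushout C (uc \<cdot> eK) r gR (wc \<cdot> eR)"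
      using pushout_paste[OF pushout_compacted po] .
    show "w' \<cdot> (wc \<cdot> eR) = tR"
      using comp_assoc[OF hom_eR wc w'(1)] w'(3) compacted_typing_R(2) by simp
    show "is_pullback C \<alpha> l' gL u'" "Cod C gR = GR" "w' \<cdot> gR = r' \<cdot> u'"
      by (fact pb GR w'(2))+
  qed
qed

end

theorem lemma4:
  fixes C :: "('o, 'a) cat"
  assumes "category C"
    and "canonical_pbpo_rule C l r tL tK tR l' r'"
    and "GL \<in> Obj C"
    and "is_mono C m'" and "hom C m' Lc GL"
    and "is_epi C e" and "hom C e (Cod C l) Lc"
    and "hom C tLc Lc (Cod C tL)" and "tL = Comp C tLc e"
    and "compacted_rule C l r tL tK tR l' r' e tLc k tKc eK rc eR tRc"
  shows "\<forall>\<alpha> GR. pbpo_step C l r tL tK tR l' r' (Comp C m' e) \<alpha> GL GR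
            \<longleftrightarrow> pbpo_step C k rc tLc tKc tRc l' r' m' \<alpha> GL GR"
proof -
  interpret compaction C l r tL tK tR l' r' e tLc k tKc eK rc eR tRc
    by unfold_locales (fact assms(1), fact assms(10))
  have "hom C m' (Cod C e) GL"
    using assms(5,7) by (simp add: hom_def)
  then show ?thesis
    using pbpo_step_compacted_if_step pbpo_step_if_compacted_step by blast
qed

end
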